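(* Let $G$ be a finite simple graph with threshold assignment $\tau$. Let $H$ be a triangle-free $\tau$-resistant subgraph of $G$ and let $uv$ be an edge with $u,v\in V(H)$. Define $\tau'$ by $\tau'(w)=\tau(w)$ for $w\notin V(H)$, $\tau'(w)=0$ for $w\in V(H)\setminus\{u,v\}$, $\tau'(v)=deg_G(v)$ and $\tau'(u)=deg_G(u)$. Then $\overline{\tau'}\le\overline{\tau}$.
   Context: A threshold assignment is a function $\tau:V(G)\to\{0,1,2,\dots\}$ with average $\overline{\tau}=\sum_v\tau(v)/|V(G)|$. An induced subgraph $K$ of $G$ is $\tau$-resistant if $deg_K(v)\ge deg_G(v)-\tau(v)+1$ for every vertex $v\in K$. *)

theory Defs
  imports Complex_Main
begin

definition simple_graph :: "'a set \<Rightarrow> ('a \<Rightarrow> 'a \<Rightarrow> bool) \<Rightarrow> bool" where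
  "simple_graph V E \<longleftrightarrow> finite V \<and> (\<forall>x y. E x y \<longrightarrow> x \<in> V \<and> y \<in> V)
     \<and> (\<forall>x y. E x y \<longrightarrow> E y x) \<and> (\<forall>x. \<not> E x x)"

definition deg :: "'a set \<Rightarrow> ('a \<Rightarrow> 'a \<Rightarrow> bool) \<Rightarrow> 'a \<Rightarrow> nat" where
  "deg S E v = card {w \<in> S. E v w}"

definition avg_thr :: "'a set \<Rightarrow> ('a \<Rightarrow> nat) \<Rightarrow> real" where
  "avg_thr V \<tau> = (\<Sum>v\<in>V. real (\<tau> v)) / real (card V)"

definition resistant :: "'a set \<Rightarrow> ('a \<Rightarrow> 'a \<Rightarrow> bool) \<Rightarrow> ('a \<Rightarrow> nat) \<Rightarrow> 'a set \<Rightarrow> bool" where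
  "resistant V E \<tau> S \<longleftrightarrow> S \<subseteq> V \<and>
     (\<forall>v\<in>S. int (deg S E v) \<ge> int (deg V E v) - int (\<tau> v) + 1)"

definition triangle_free :: "'a set \<Rightarrow> ('a \<Rightarrow> 'a \<Rightarrow> bool) \<Rightarrow> bool" where
  "triangle_free S E \<longleftrightarrow> \<not> (\<exists>x\<in>S. \<exists>y\<in>S. \<exists>z\<in>S. E x y \<and> E y z \<and> E x z)"

end

theory Submission
  imports Defs
begin

text \<open>Resistance gives \<open>deg\<^sub>G(w) \<le> \<tau>(w) + deg\<^sub>H(w) - 1\<close> on \<open>H\<close>, so in particular
  \<open>\<tau> \<ge> 1\<close> on \<open>H\<close>. Triangle-freeness makes the \<open>H\<close>-neighbourhoods of the adjacent
  vertices \<open>u, v\<close> disjoint, so \<open>deg\<^sub>H(u) + deg\<^sub>H(v) \<le> |H|\<close>. Hence the new total on \<open>H\<close>,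
  \<open>deg\<^sub>G(u) + deg\<^sub>G(v)\<close>, is at most \<open>\<tau>(u) + \<tau>(v) + |H| - 2\<close>, which is at most the old
  total on \<open>H\<close>; outside \<open>H\<close> nothing changes.\<close>

lemma deg_mono:
  assumes "S \<subseteq> T" "finite T"
  shows "deg S E w \<le> deg T E w"
  unfolding deg_def using assms by (intro card_mono) auto

lemma resistant_threshold_pos:
  assumes "resistant V E \<tau> H" "finite V" "w \<in> H"
  shows "1 \<le> \<tau> w"
proof -
  have "H \<subseteq> V" and "int (deg H E w) \<ge> int (deg V E w) - int (\<tau> w) + 1"
    using assms by (auto simp: resistant_def)
  with deg_mono[of H V E w] assms(2) show ?thesis by linarith
qed

lemma triangle_free_deg_add_deg_le_card:
  assumes "triangle_free S E" "finite S" "u \<in> S" "v \<in> S" "E u v"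
  shows "deg S E u + deg S E v \<le> card S"
proof -
  have "{w \<in> S. E u w} \<inter> {w \<in> S. E v w} = {}"
    using assms unfolding triangle_free_def by blast
  then have "deg S E u + deg S E v = card ({w \<in> S. E u w} \<union> {w \<in> S. E v w})"
    unfolding deg_def using assms(2) by (simp add: card_Un_disjoint)
  also have "\<dots> \<le> card S"
    using assms(2) by (intro card_mono) auto
  finally show ?thesis .
qed

lemma sum_two_plus_card_le:
  fixes f :: "'a \<Rightarrow> nat"
  assumes "finite A" "u \<in> A" "v \<in> A" "u \<noteq> v" "\<And>w. w \<in> A \<Longrightarrow> 1 \<le> f w"
  shows "f u + f v + (card A - 2) \<le> sum f A"
proof -
  have "card A - 2 = card (A - {u, v})"
    using assms(1-4) by simp
  also have "\<dots> \<le> sum f (A - {u, v})"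
    using sum_bounded_below[of "A - {u, v}" 1 f] assms(5) by fastforce
  finally have "f u + f v + (card A - 2) \<le> f u + f v + sum f (A - {u, v})"
    by simp
  also have "\<dots> = sum f A"
    using assms(1-4) by (simp add: sum.remove[of A u] sum.remove[of "A - {u}" v] insert_Diff_if
        Diff_insert2[symmetric])
  finally show ?thesis .
qed

lemma avg_thr_mono:
  assumes "(\<Sum>w\<in>V. \<sigma> w) \<le> (\<Sum>w\<in>V. \<tau> w)"
  shows "avg_thr V \<sigma> \<le> avg_thr V \<tau>"
proof -
  have "(\<Sum>w\<in>V. real (\<sigma> w)) \<le> (\<Sum>w\<in>V. real (\<tau> w))"
    using assms by (metis of_nat_le_iff of_nat_sum)
  then show ?thesis
    unfolding avg_thr_def by (simp add: divide_right_mono)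
qed

theorem lemma2:
  fixes V H :: "'a set" and E :: "'a \<Rightarrow> 'a \<Rightarrow> bool" and \<tau> :: "'a \<Rightarrow> nat" and u v :: 'a
  assumes "simple_graph V E"
    and "resistant V E \<tau> H"
    and "triangle_free H E"
    and "u \<in> H" and "v \<in> H" and "E u v"
  shows "avg_thr V (\<lambda>w. if w \<notin> H then \<tau> w else if w = v then deg V E v
                         else if w = u then deg V E u else 0) \<le> avg_thr V \<tau>"
    (is "avg_thr V ?\<sigma> \<le> _")
proof (rule avg_thr_mono)
  have "finite V" "H \<subseteq> V" "u \<noteq> v"
    using assms(1,2,6) by (auto simp: simple_graph_def resistant_def)
  then have "finite H"
    using finite_subset by blast
  have resistant_at: "int (deg V E w) \<le> int (\<tau> w) + int (deg H E w) - 1" if "w \<in> H" for w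
    using assms(2) that by (auto simp: resistant_def)
  have "2 \<le> card H"
    using card_mono[of H "{u, v}"] \<open>finite H\<close> \<open>u \<noteq> v\<close> assms(4,5) by simp
  have "sum ?\<sigma> H = deg V E u + deg V E v"
    using \<open>finite H\<close> \<open>u \<noteq> v\<close> assms(4,5) by (simp add: sum.If_cases Int_absorb1 Int_commute)
  also have "\<dots> \<le> \<tau> u + \<tau> v + (card H - 2)"
    using triangle_free_deg_add_deg_le_card[OF assms(3) \<open>finite H\<close> assms(4-6)]
      resistant_at[OF assms(4)] resistant_at[OF assms(5)] \<open>2 \<le> card H\<close> by linarith
  also have "\<dots> \<le> sum \<tau> H"
    using sum_two_plus_card_le[OF \<open>finite H\<close> assms(4,5) \<open>u \<noteq> v\<close>]
      resistant_threshold_pos[OF assms(2) \<open>finite V\<close>] by blast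
  finally have "sum ?\<sigma> H \<le> sum \<tau> H" .
  moreover have "sum ?\<sigma> (V - H) = sum \<tau> (V - H)"
    by simp
  ultimately show "sum ?\<sigma> V \<le> sum \<tau> V"
    using sum.subset_diff[OF \<open>H \<subseteq> V\<close> \<open>finite V\<close>, of ?\<sigma>]
      sum.subset_diff[OF \<open>H \<subseteq> V\<close> \<open>finite V\<close>, of \<tau>] by linarith
qed

end
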